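(* Let $(P,\leqslant)$ be a conditionally-complete interpolating poset and let $P^* := \{x \in P : \exists\, y \in P,\ y \ll x\}$. Let $D$ be a directed subset of $P$ bounded above, and assume there exists $y \in P^*$ with $y \leqslant \bigvee D$. Then $D \cap P^* \neq \emptyset$; consequently $D \cap P^*$ is directed and $\bigvee D = \bigvee (D \cap P^* )$.
   Context: A poset is conditionally-complete if every nonempty subset bounded above has a supremum. A nonempty subset $D$ is directed if any two elements of $D$ have an upper bound in $D$. For $x,y \in P$, $x \ll y$ ($x$ way-below $y$) means: for every directed subset $D$ of $P$ bounded above with supremum $d_0$, $y \leqslant d_0$ implies $x \leqslant d$ for some $d \in D$. $P$ is interpolating if whenever $x \ll y$ there is $z \in P$ with $x \ll z \ll y$. *)

theory Defs
  imports Main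
begin

text \<open>Posets are modelled as types of class order; P is the whole type.\<close>

definition bdd_above_set :: "'a::order set \<Rightarrow> bool" where
  "bdd_above_set S \<longleftrightarrow> (\<exists>u. \<forall>x\<in>S. x \<le> u)"

definition is_lub :: "'a::order set \<Rightarrow> 'a \<Rightarrow> bool" where
  "is_lub S s \<longleftrightarrow> (\<forall>x\<in>S. x \<le> s) \<and> (\<forall>u. (\<forall>x\<in>S. x \<le> u) \<longrightarrow> s \<le> u)"

definition lub :: "'a::order set \<Rightarrow> 'a" where
  "lub S = (THE s. is_lub S s)"

definition cond_complete :: "'a::order itself \<Rightarrow> bool" where
  "cond_complete _ \<longleftrightarrow> (\<forall>S::'a set. S \<noteq> {} \<and> bdd_above_set S \<longrightarrow> (\<exists>s. is_lub S s))"

definition directed :: "'a::order set \<Rightarrow> bool" where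
  "directed D \<longleftrightarrow> D \<noteq> {} \<and> (\<forall>x\<in>D. \<forall>y\<in>D. \<exists>z\<in>D. x \<le> z \<and> y \<le> z)"

definition way_below :: "'a::order \<Rightarrow> 'a \<Rightarrow> bool" (infix "\<lless>" 50) where
  "x \<lless> y \<longleftrightarrow> (\<forall>D d0. directed D \<and> is_lub D d0 \<and> y \<le> d0 \<longrightarrow> (\<exists>d\<in>D. x \<le> d))"

definition interpolating :: "'a::order itself \<Rightarrow> bool" where
  "interpolating _ \<longleftrightarrow> (\<forall>x y::'a. x \<lless> y \<longrightarrow> (\<exists>z. x \<lless> z \<and> z \<lless> y))"

definition Pstar :: "'a::order set" where
  "Pstar = {x. \<exists>y. y \<lless> x}"

end

theory Submission
  imports Defs
begin

text \<open>Since \<open>P\<^sup>*\<close> is an up-set, it suffices to find one element of \<open>D\<close> in \<open>P\<^sup>*\<close>: then \<open>D \<inter> P\<^sup>*\<close>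
  is cofinal in \<open>D\<close>, hence directed with the same supremum. For \<open>y \<in> P\<^sup>*\<close>, say \<open>w \<lless> y\<close>,
  interpolate \<open>w \<lless> z \<lless> y\<close>; as \<open>y \<le> \<Or>D\<close>, some \<open>d \<in> D\<close> lies above \<open>z\<close>, and then \<open>w \<lless> d\<close>.\<close>

lemma way_below_mono_right: "x \<lless> y \<Longrightarrow> y \<le> y' \<Longrightarrow> x \<lless> y'"
  unfolding way_below_def by (meson order_trans)

lemma Pstar_upward_closed: "x \<in> Pstar \<Longrightarrow> x \<le> y \<Longrightarrow> y \<in> Pstar"
  unfolding Pstar_def using way_below_mono_right by blast

lemma lub_eqI: "is_lub S s \<Longrightarrow> lub S = s"
  unfolding lub_def
  by (rule the_equality) (auto simp: is_lub_def intro: order.antisym)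

lemma is_lub_cofinal_subset:
  assumes "is_lub S s" and "T \<subseteq> S" and "\<forall>x\<in>S. \<exists>t\<in>T. x \<le> t"
  shows "is_lub T s"
  using assms unfolding is_lub_def by (meson subsetD order_trans)

lemma directed_inter_upset:
  assumes "directed D" and "d \<in> D \<inter> U" and "\<And>x y. x \<in> U \<Longrightarrow> x \<le> y \<Longrightarrow> y \<in> U"
  shows "directed (D \<inter> U)" and "\<forall>x\<in>D. \<exists>c\<in>D \<inter> U. x \<le> c"
proof -
  show "\<forall>x\<in>D. \<exists>c\<in>D \<inter> U. x \<le> c"
  proof
    fix x assume "x \<in> D"
    then obtain c where "c \<in> D" "x \<le> c" "d \<le> c"
      using assms(1,2) unfolding directed_def by blast
    then show "\<exists>c\<in>D \<inter> U. x \<le> c" using assms(2,3) by blast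
  qed
  show "directed (D \<inter> U)"
    using assms unfolding directed_def by (metis IntD1 IntD2 IntI emptyE)
qed

lemma directed_meets_Pstar:
  assumes "interpolating TYPE('a::order)"
    and "directed D" and "is_lub D s"
    and "y \<in> Pstar" and "y \<le> s"
  shows "\<exists>d\<in>D. d \<in> (Pstar :: 'a set)"
proof -
  obtain w where "w \<lless> y" using assms(4) unfolding Pstar_def by auto
  then obtain z where wz: "w \<lless> z" and "z \<lless> y"
    using assms(1) unfolding interpolating_def by blast
  then obtain d where "d \<in> D" "z \<le> d"
    using assms(2,3,5) unfolding way_below_def by blast
  moreover have "w \<lless> d" using wz \<open>z \<le> d\<close> by (rule way_below_mono_right)
  ultimately show ?thesis unfolding Pstar_def by blast
qed

theorem lemma2p3:
  fixes D :: "'a::order set"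
  assumes "cond_complete TYPE('a)"
    and "interpolating TYPE('a)"
    and "directed D"
    and "bdd_above_set D"
    and "\<exists>y\<in>Pstar. y \<le> lub D"
  shows "D \<inter> Pstar \<noteq> {} \<and> directed (D \<inter> Pstar) \<and> lub D = lub (D \<inter> Pstar)"
proof -
  obtain s where s: "is_lub D s"
    using assms(1,3,4) unfolding cond_complete_def directed_def by blast
  then have lub_D: "lub D = s" by (rule lub_eqI)
  obtain d where d: "d \<in> D \<inter> Pstar"
    using directed_meets_Pstar[OF assms(2,3) s] assms(5) lub_D by blast
  note inter = directed_inter_upset[OF assms(3) d Pstar_upward_closed]
  have "lub (D \<inter> Pstar) = s"
    using is_lub_cofinal_subset[OF s _ inter(2)] by (simp add: lub_eqI)
  then show ?thesis using d inter(1) lub_D by auto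
qed

end
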